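(* Let $r\ge 2$ and $n\ge1$ be integers, and for $k=0,1,\dots,n$ let $\boldsymbol{\lambda}_k=((n-k);(1^k);\emptyset;\dots;\emptyset)$. Then the number of standard $\boldsymbol{\lambda}_k$-tableaux is $\binom{n}{k}$, and every standard $\boldsymbol{\lambda}_k$-tableau has exactly $k$ descents.
   Context: An $r$-multipartition $\boldsymbol{\lambda}=(\lambda^{(0)};\dots;\lambda^{(r-1)})$ of $n$ is an $r$-tuple of partitions of total size $n$; here $\boldsymbol\lambda_k$ has a one-row component $(n-k)$ in position $0$, a one-column component $(1^k)$ in position $1$, and empty components otherwise. A standard $\boldsymbol{\lambda}$-tableau fills the boxes of all components with $1,\dots,n$, each once, increasing along rows and down columns in each component. An integer $i\in\{1,\dots,n-1\}$ is a descent of $\mathrm{T}$ if, with $i$ in row $a$ of component $c$ and $i+1$ in row $x$ of component $z$, either $c=z$ and $a<x$, or $c>z$; $n$ is a descent iff $n$ lies in a component $c>0$. *)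

theory Defs
  imports Main
begin

text \<open>A partition is a list of row lengths (weakly decreasing, positive);
an r-multipartition is a list of r partitions. A box is a triple
(component c, row a, column b), all indexed from 0.\<close>

type_synonym partition = "nat list"
type_synonym multipartition = "partition list"
type_synonym box = "nat \<times> nat \<times> nat"

definition boxes :: "multipartition \<Rightarrow> box set" where
  "boxes lam = {(c, a, b). c < length lam \<and> a < length (lam ! c) \<and> b < (lam ! c) ! a}"

text \<open>To make tableaux unique objects, the function is 0 outside the boxes.\<close>

definition standard_tableau :: "multipartition \<Rightarrow> nat \<Rightarrow> (box \<Rightarrow> nat) \<Rightarrow> bool" where
  "standard_tableau lam n T \<longleftrightarrow>
     bij_betw T (boxes lam) {1..n} \<and>
     (\<forall>x. x \<notin> boxes lam \<longrightarrow> T x = 0) \<and>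
     (\<forall>c a b. (c, a, b) \<in> boxes lam \<and> (c, a, Suc b) \<in> boxes lam \<longrightarrow> T (c, a, b) < T (c, a, Suc b)) \<and>
     (\<forall>c a b. (c, a, b) \<in> boxes lam \<and> (c, Suc a, b) \<in> boxes lam \<longrightarrow> T (c, a, b) < T (c, Suc a, b))"

definition box_of :: "multipartition \<Rightarrow> (box \<Rightarrow> nat) \<Rightarrow> nat \<Rightarrow> box" where
  "box_of lam T i = the_inv_into (boxes lam) T i"

definition comp_of :: "multipartition \<Rightarrow> (box \<Rightarrow> nat) \<Rightarrow> nat \<Rightarrow> nat" where
  "comp_of lam T i = fst (box_of lam T i)"

definition row_of :: "multipartition \<Rightarrow> (box \<Rightarrow> nat) \<Rightarrow> nat \<Rightarrow> nat" where
  "row_of lam T i = fst (snd (box_of lam T i))"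

definition descents :: "multipartition \<Rightarrow> nat \<Rightarrow> (box \<Rightarrow> nat) \<Rightarrow> nat set" where
  "descents lam n T =
     {i \<in> {1..<n}. (comp_of lam T i = comp_of lam T (Suc i) \<and> row_of lam T i < row_of lam T (Suc i))
                   \<or> comp_of lam T i > comp_of lam T (Suc i)}
     \<union> {i. i = n \<and> comp_of lam T n > 0}"

definition hook_multipartition :: "nat \<Rightarrow> nat \<Rightarrow> nat \<Rightarrow> multipartition" where
  "hook_multipartition r n k =
     (if n - k = 0 then [] else [n - k]) # replicate k 1 # replicate (r - 2) []"

end

theory Submission
  imports Defs
begin

text \<open>The boxes of \<open>\<lambda>\<^sub>k\<close> form a row of length \<open>n - k\<close> in component 0 and a column
of length \<open>k\<close> in component 1, with no constraints between them. A standard tableau is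
therefore determined by the set \<open>S\<close> of entries in the column: both parts are filled in
increasing order, the column with \<open>S\<close> and the row with its complement. Every \<open>k\<close>-subset
of \<open>{1..n}\<close> arises, giving \<open>n choose k\<close> tableaux. Moreover the descents are exactly \<open>S\<close>:
an entry \<open>i\<close> of the row is followed by \<open>i + 1\<close> further along the row or in the
higher component, and \<open>n\<close> in the row is not a descent; an entry \<open>i\<close> of the column is
followed by \<open>i + 1\<close> lower in the column or in the lower component, and \<open>n\<close> in the
column is a descent.\<close>


lemma strict_mono_on_lessThan_iff_Suc:
  fixes f :: "nat \<Rightarrow> 'a::order"
  shows "strict_mono_on {..<m} f \<longleftrightarrow> (\<forall>a. Suc a < m \<longrightarrow> f a < f (Suc a))"
proof
  assume step: "\<forall>a. Suc a < m \<longrightarrow> f a < f (Suc a)"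
  have "f a < f b" if "a < b" "b < m" for a b
    using that
  proof (induction b)
    case (Suc b)
    then show ?case using step by (metis less_Suc_eq order.strict_trans Suc_lessD)
  qed simp
  then show "strict_mono_on {..<m} f" by (intro strict_mono_onI) auto
qed (auto simp: strict_mono_on_def)

lemma nth_sorted_list_of_set_image_lessThan:
  fixes f :: "nat \<Rightarrow> 'a::linorder"
  assumes "strict_mono_on {..<m} f" "a < m"
  shows "sorted_list_of_set (f ` {..<m}) ! a = f a"
proof -
  have "sorted_wrt (<) (map f [0..<m])"
    using assms(1) by (auto simp: sorted_wrt_iff_nth_less strict_mono_on_def)
  then have "sorted_list_of_set (f ` {..<m}) = map f [0..<m]"
    by (intro strict_sorted_equal) auto
  then show ?thesis using assms(2) by simp
qed

lemma strict_mono_on_nth_sorted_list_of_set: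
  "strict_mono_on {..<card A} (\<lambda>i. sorted_list_of_set A ! i)"
  using sorted_wrt_iff_nth_less[of "(<)" "sorted_list_of_set A"]
  by (intro strict_mono_onI) auto

lemma box_of_apply_standard_tableau:
  assumes "standard_tableau lam n T" "x \<in> boxes lam"
  shows "box_of lam T (T x) = x"
  using assms unfolding standard_tableau_def box_of_def bij_betw_def
  by (simp add: the_inv_into_f_f)

definition hook_row :: "nat \<Rightarrow> box set" where
  "hook_row m = (\<lambda>b. (0, 0, b)) ` {..<m}"

definition hook_column :: "nat \<Rightarrow> box set" where
  "hook_column k = (\<lambda>a. (1, a, 0)) ` {..<k}"

lemma boxes_hook_multipartition:
  assumes "2 \<le> r"
  shows "boxes (hook_multipartition r n k) = hook_row (n - k) \<union> hook_column k"
proof (rule set_eqI)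
  fix x :: box
  obtain c a b where x: "x = (c, a, b)" by (cases x)
  have "(c, a, b) \<in> boxes (hook_multipartition r n k) \<longleftrightarrow>
        (c = 0 \<and> a = 0 \<and> b < n - k) \<or> (c = 1 \<and> a < k \<and> b = 0)"
    using assms
    by (cases c; cases "c - 1") (auto simp: boxes_def hook_multipartition_def nth_Cons')
  then show "x \<in> boxes (hook_multipartition r n k) \<longleftrightarrow> x \<in> hook_row (n - k) \<union> hook_column k"
    unfolding x hook_row_def hook_column_def by auto
qed

lemma standard_tableau_hook_multipartition_iff:
  assumes "2 \<le> r"
  shows "standard_tableau (hook_multipartition r n k) n T \<longleftrightarrow>
           bij_betw T (hook_row (n - k) \<union> hook_column k) {1..n}
         \<and> (\<forall>x. x \<notin> hook_row (n - k) \<union> hook_column k \<longrightarrow> T x = 0)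
         \<and> strict_mono_on {..<n - k} (\<lambda>b. T (0, 0, b))
         \<and> strict_mono_on {..<k} (\<lambda>a. T (1, a, 0))"
  unfolding standard_tableau_def boxes_hook_multipartition[OF assms] strict_mono_on_lessThan_iff_Suc
  by (auto simp: hook_row_def hook_column_def)

lemma card_atLeastAtMost_Diff:
  assumes "S \<subseteq> {1..n}"
  shows "card ({1..n} - S) = n - card S"
  using assms finite_subset[OF assms] by (simp add: card_Diff_subset)

definition hook_tableau :: "nat \<Rightarrow> nat \<Rightarrow> nat set \<Rightarrow> box \<Rightarrow> nat" where
  "hook_tableau n k S = (\<lambda>(c, a, b).
     if c = 1 \<and> a < k \<and> b = 0 then sorted_list_of_set S ! a
     else if c = 0 \<and> a = 0 \<and> b < n - k then sorted_list_of_set ({1..n} - S) ! b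
     else 0)"

lemma image_hook_tableau:
  assumes "S \<subseteq> {1..n}" "card S = k"
  shows "hook_tableau n k S ` hook_column k = S"
    and "hook_tableau n k S ` hook_row (n - k) = {1..n} - S"
proof -
  have "finite S" using assms(1) finite_subset by blast
  moreover have "card ({1..n} - S) = n - k"
    using card_atLeastAtMost_Diff[OF assms(1)] assms(2) by simp
  ultimately show "hook_tableau n k S ` hook_column k = S"
    and "hook_tableau n k S ` hook_row (n - k) = {1..n} - S"
    using assms(2) set_sorted_list_of_set[of S] set_sorted_list_of_set[of "{1..n} - S"]
    by (auto simp: hook_tableau_def hook_column_def hook_row_def image_image set_conv_nth)
qed

context
  fixes r n k :: nat
  assumes two_le_r: "2 \<le> r"
begin

lemma standard_tableau_hook_tableau:
  assumes "S \<subseteq> {1..n}" "card S = k"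
  shows "standard_tableau (hook_multipartition r n k) n (hook_tableau n k S)"
proof -
  let ?T = "hook_tableau n k S"
  have card_complement: "card ({1..n} - S) = n - k"
    using card_atLeastAtMost_Diff[OF assms(1)] assms(2) by simp
  have "finite (hook_row (n - k) \<union> hook_column k)"
    by (simp add: hook_row_def hook_column_def)
  moreover have "card (hook_row (n - k) \<union> hook_column k) = n"
    using assms card_mono[of "{1..n}" S]
    by (subst card_Un_disjoint) (auto simp: hook_row_def hook_column_def card_image inj_on_def)
  moreover have "?T ` (hook_row (n - k) \<union> hook_column k) = {1..n}"
    using image_hook_tableau[OF assms] assms(1) unfolding image_Un by auto
  ultimately have "bij_betw ?T (hook_row (n - k) \<union> hook_column k) {1..n}"
    by (simp add: bij_betw_def eq_card_imp_inj_on)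
  moreover have "strict_mono_on {..<n - k} (\<lambda>b. ?T (0, 0, b))"
    using strict_mono_on_nth_sorted_list_of_set[of "{1..n} - S"] card_complement
    by (auto simp: hook_tableau_def strict_mono_on_def)
  moreover have "strict_mono_on {..<k} (\<lambda>a. ?T (1, a, 0))"
    using strict_mono_on_nth_sorted_list_of_set[of S] assms(2)
    by (auto simp: hook_tableau_def strict_mono_on_def)
  ultimately show ?thesis
    unfolding standard_tableau_hook_multipartition_iff[OF two_le_r]
    by (auto simp: hook_tableau_def hook_row_def hook_column_def)
qed

lemma entries_standard_tableau_hook:
  assumes "standard_tableau (hook_multipartition r n k) n T"
  shows "T ` hook_column k \<subseteq> {1..n}"
    and "card (T ` hook_column k) = k"
    and "T ` hook_row (n - k) = {1..n} - T ` hook_column k"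
proof -
  have bij: "bij_betw T (hook_row (n - k) \<union> hook_column k) {1..n}"
    using assms by (simp add: standard_tableau_hook_multipartition_iff[OF two_le_r])
  then have inj: "inj_on T (hook_row (n - k) \<union> hook_column k)"
    and img: "T ` (hook_row (n - k) \<union> hook_column k) = {1..n}"
    by (auto simp: bij_betw_def)
  show "T ` hook_column k \<subseteq> {1..n}" using img by auto
  have "card (hook_column k) = k"
    by (simp add: hook_column_def card_image inj_on_def)
  then show "card (T ` hook_column k) = k"
    using inj by (simp add: card_image inj_on_Un)
  have "T ` hook_row (n - k) \<inter> T ` hook_column k = {}"
    using inj_on_image_Int[OF inj, of "hook_row (n - k)" "hook_column k"]
    by (auto simp: hook_row_def hook_column_def)
  then show "T ` hook_row (n - k) = {1..n} - T ` hook_column k"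
    using img by auto
qed

lemma hook_tableau_column_entries:
  assumes "standard_tableau (hook_multipartition r n k) n T"
  shows "hook_tableau n k (T ` hook_column k) = T"
proof
  fix x :: box
  have column_entries: "T ` hook_column k = (\<lambda>a. T (1, a, 0)) ` {..<k}"
    and row_entries: "{1..n} - T ` hook_column k = (\<lambda>b. T (0, 0, b)) ` {..<n - k}"
    using entries_standard_tableau_hook(3)[OF assms]
    by (auto simp: hook_column_def hook_row_def image_image)
  from assms have column_mono: "strict_mono_on {..<k} (\<lambda>a. T (1, a, 0))"
    and row_mono: "strict_mono_on {..<n - k} (\<lambda>b. T (0, 0, b))"
    and outside_zero: "\<forall>x. x \<notin> hook_row (n - k) \<union> hook_column k \<longrightarrow> T x = 0"
    by (simp_all add: standard_tableau_hook_multipartition_iff[OF two_le_r])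
  consider (column) a where "x = (1, a, 0)" "a < k"
    | (row) b where "x = (0, 0, b)" "b < n - k"
    | (outside) "x \<notin> hook_row (n - k) \<union> hook_column k"
    by (auto simp: hook_row_def hook_column_def)
  then show "hook_tableau n k (T ` hook_column k) x = T x"
  proof cases
    case column
    then show ?thesis
      using nth_sorted_list_of_set_image_lessThan[OF column_mono \<open>a < k\<close>]
      unfolding hook_tableau_def column_entries by simp
  next
    case row
    then show ?thesis
      using nth_sorted_list_of_set_image_lessThan[OF row_mono \<open>b < n - k\<close>]
      unfolding hook_tableau_def row_entries by simp
  next
    case outside
    then show ?thesis
      using outside_zero by (cases x) (auto simp: hook_tableau_def hook_row_def hook_column_def)
  qed
qed

lemma standard_tableaux_hook_multipartition:
  "{T. standard_tableau (hook_multipartition r n k) n T}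
     = hook_tableau n k ` {S. S \<subseteq> {1..n} \<and> card S = k}"
proof (rule set_eqI)
  fix T
  show "T \<in> {T. standard_tableau (hook_multipartition r n k) n T}
        \<longleftrightarrow> T \<in> hook_tableau n k ` {S. S \<subseteq> {1..n} \<and> card S = k}"
    using standard_tableau_hook_tableau hook_tableau_column_entries[of T]
      entries_standard_tableau_hook(1,2)[of T]
    by (auto intro!: image_eqI[of T _ "T ` hook_column k"])
qed

lemma card_standard_tableaux_hook_multipartition:
  "card {T. standard_tableau (hook_multipartition r n k) n T} = n choose k"
proof -
  have "inj_on (hook_tableau n k) {S. S \<subseteq> {1..n} \<and> card S = k}"
    by (rule inj_on_inverseI[where g = "\<lambda>T. T ` hook_column k"])
       (simp add: image_hook_tableau(1))
  then show ?thesis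
    by (simp add: standard_tableaux_hook_multipartition card_image n_subsets)
qed

lemma box_of_hook_multipartition:
  assumes "standard_tableau (hook_multipartition r n k) n T" "i \<in> {1..n}"
  obtains (column) a where "a < k" "T (1, a, 0) = i" "i \<in> T ` hook_column k"
      "box_of (hook_multipartition r n k) T i = (1, a, 0)"
    | (row) b where "i \<notin> T ` hook_column k"
      "box_of (hook_multipartition r n k) T i = (0, 0, b)"
proof (cases "i \<in> T ` hook_column k")
  case True
  then obtain a where "a < k" "T (1, a, 0) = i" by (auto simp: hook_column_def)
  moreover have "(1, a, 0) \<in> boxes (hook_multipartition r n k)"
    using \<open>a < k\<close> by (simp add: boxes_hook_multipartition[OF two_le_r] hook_column_def)
  ultimately show ?thesis
    using column True box_of_apply_standard_tableau[OF assms(1)] by blast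
next
  case False
  then have "i \<in> T ` hook_row (n - k)"
    using assms(2) entries_standard_tableau_hook(3)[OF assms(1)] by blast
  then obtain b where "b < n - k" "T (0, 0, b) = i" by (auto simp: hook_row_def)
  moreover have "(0, 0, b) \<in> boxes (hook_multipartition r n k)"
    using \<open>b < n - k\<close> by (simp add: boxes_hook_multipartition[OF two_le_r] hook_row_def)
  ultimately show ?thesis
    using row False box_of_apply_standard_tableau[OF assms(1)] by blast
qed

lemma descents_hook_multipartition:
  assumes "standard_tableau (hook_multipartition r n k) n T" "1 \<le> n"
  shows "descents (hook_multipartition r n k) n T = T ` hook_column k"
proof -
  let ?lam = "hook_multipartition r n k"
  let ?S = "T ` hook_column k"
  have comp_of: "comp_of ?lam T i = (if i \<in> ?S then 1 else 0)" if "i \<in> {1..n}" for i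
    using assms(1) that by (cases rule: box_of_hook_multipartition) (auto simp: comp_of_def)
  have row_of: "row_of ?lam T i = 0" if "i \<in> {1..n}" "i \<notin> ?S" for i
    using assms(1) that by (cases rule: box_of_hook_multipartition) (auto simp: row_of_def)
  have descent_iff: "(comp_of ?lam T i = comp_of ?lam T (Suc i) \<and> row_of ?lam T i < row_of ?lam T (Suc i))
        \<or> comp_of ?lam T i > comp_of ?lam T (Suc i) \<longleftrightarrow> i \<in> ?S" if "i \<in> {1..<n}" for i
  proof -
    have i: "i \<in> {1..n}" and Suc_i: "Suc i \<in> {1..n}" using that by auto
    have column_mono: "strict_mono_on {..<k} (\<lambda>a. T (1, a, 0))"
      using assms(1) by (simp add: standard_tableau_hook_multipartition_iff[OF two_le_r])
    from assms(1) i show ?thesis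
    proof (cases rule: box_of_hook_multipartition)
      case (column a)
      from assms(1) Suc_i show ?thesis
      proof (cases rule: box_of_hook_multipartition)
        case (column a')
        have "a < a'"
          using strict_mono_on_less[OF column_mono, of a a'] \<open>a < k\<close> \<open>a' < k\<close>
            \<open>T (1, a, 0) = i\<close> \<open>T (1, a', 0) = Suc i\<close> by simp
        then show ?thesis using \<open>i \<in> ?S\<close> column
          by (simp add: comp_of_def row_of_def \<open>box_of ?lam T i = (1, a, 0)\<close>)
      next
        case row
        then show ?thesis using \<open>i \<in> ?S\<close> comp_of[OF i] comp_of[OF Suc_i] by simp
      qed
    next
      case row
      then show ?thesis using comp_of[OF i] comp_of[OF Suc_i] row_of[OF i] row_of[OF Suc_i]
        by auto
    qed
  qed
  have "?S \<subseteq> {1..n}" using entries_standard_tableau_hook(1)[OF assms(1)] .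
  show ?thesis
  proof (rule set_eqI)
    fix i
    consider "i \<in> {1..<n}" | "i = n" | "i \<notin> {1..n}" by fastforce
    then show "i \<in> descents ?lam n T \<longleftrightarrow> i \<in> ?S"
    proof cases
      case 1
      then show ?thesis using descent_iff[OF 1] by (simp add: descents_def)
    next
      case 2
      then show ?thesis using comp_of[of n] assms(2) by (simp add: descents_def)
    next
      case 3
      then show ?thesis using \<open>?S \<subseteq> {1..n}\<close> assms(2) by (auto simp: descents_def)
    qed
  qed
qed

end

theorem mainTheorem3:
  fixes r n k :: nat
  assumes "r \<ge> 2" and "n \<ge> 1" and "k \<le> n"
  shows "card {T. standard_tableau (hook_multipartition r n k) n T} = n choose k
       \<and> (\<forall>T. standard_tableau (hook_multipartition r n k) n T \<longrightarrow>
              card (descents (hook_multipartition r n k) n T) = k)"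
  using card_standard_tableaux_hook_multipartition[OF assms(1)]
    descents_hook_multipartition[OF assms(1) _ assms(2)]
    entries_standard_tableau_hook(2)[OF assms(1)]
  by simp

end
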